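(* Let $a,b\in\mathbb{Z}$ with $\gcd(a,b)=1$. Then $\{G_n(a,b)\}$ is complete mod $3^j$ for every integer $j\ge 1$.
   Context: For integers $a,b$ with $\gcd(a,b)=1$, the Gibonacci sequence $\{G_n(a,b)\}_{n\ge1}$ is defined by $G_1=a$, $G_2=b$, $G_{n+1}=G_{n-1}+G_n$. A sequence is complete mod $m$ if every residue class modulo $m$ contains some term of the sequence. *)

theory Defs
  imports "HOL-Number_Theory.Cong"
begin

text \<open>Gibonacci sequence G_n(a,b), indexed from n = 1: G_1 = a, G_2 = b,
  G_(n+1) = G_(n-1) + G_n. The value at index 0 is a dummy (never used).\<close>
fun gib :: "int \<Rightarrow> int \<Rightarrow> nat \<Rightarrow> int" where
  "gib a b 0 = 0"
| "gib a b (Suc 0) = a"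
| "gib a b (Suc (Suc 0)) = b"
| "gib a b (Suc (Suc (Suc n))) = gib a b (Suc n) + gib a b (Suc (Suc n))"

definition complete_mod :: "(nat \<Rightarrow> int) \<Rightarrow> int \<Rightarrow> bool" where
  "complete_mod G m \<longleftrightarrow> (\<forall>r::int. \<exists>n\<ge>1. [G n = r] (mod m))"

end

theory Submission
  imports Defs "HOL-Number_Theory.Fib"
begin

text \<open>
  Call an integer sequence U Fibonacci-like if U(n+2) = U n + U(n+1). For such U and every i,
  U(n + 8\<cdot>3^i) \<equiv> U n + 3^(i+1)\<cdot>U(n+2) (mod 3^(i+2)): for i = 0 this is a direct computation,
  and the step from i to i+1 applies the congruence to U and to the difference quotients
  (U(n+P) - U n) / 3^(i+1), which are again Fibonacci-like. Hence shifting the index by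
  k\<cdot>8\<cdot>3^i moves U n by k\<cdot>3^(i+1)\<cdot>U(n+2) modulo 3^(i+2) and leaves U(n+2) unchanged mod 3.
  When U(n+2) is a unit mod 3, a suitable k lifts a solution of U n \<equiv> r (mod 3^(i+1)) to one
  modulo 3^(i+2). Coprimality of a and b makes the initial pair nonzero mod 3, and the case of
  modulus 3 is a check over one period of the residues.
\<close>

definition fib_like :: "(nat \<Rightarrow> int) \<Rightarrow> bool" where
  "fib_like U \<longleftrightarrow> (\<forall>n. U (n + 2) = U n + U (n + 1))"

lemma fib_likeD: "fib_like U \<Longrightarrow> U (n + 2) = U n + U (n + 1)"
  unfolding fib_like_def by blast

lemma fib_like_gib: "fib_like (\<lambda>n. gib a b (n + 1))"
  unfolding fib_like_def by (simp add: numeral_eq_Suc)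

lemma fib_like_shift: "fib_like U \<Longrightarrow> fib_like (\<lambda>n. U (n + k))"
  unfolding fib_like_def by (metis add.commute add.left_commute)

lemma fib_like_diff: "fib_like U \<Longrightarrow> fib_like V \<Longrightarrow> fib_like (\<lambda>n. U n - V n)"
  unfolding fib_like_def by simp

lemma fib_like_div:
  assumes "fib_like U" and "\<And>n. m dvd U n"
  shows "fib_like (\<lambda>n. U n div m)"
  using assms unfolding fib_like_def by (simp add: div_add)

lemma fib_like_closed_form:
  assumes "fib_like U"
  shows "U n = int (fib (n + 1)) * U 0 + int (fib n) * (U 1 - U 0)"
proof (induction n rule: fib.induct)
  case (3 n)
  then show ?case using fib_likeD[OF assms, of n] by (simp add: algebra_simps)
qed simp_all

lemma fib_like_add_8:
  assumes "fib_like U"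
  shows "U (n + 8) = 13 * U n + 21 * U (n + 1)"
  using fib_like_closed_form[OF fib_like_shift[OF assms], of 8 n]
  by (simp add: eval_nat_numeral algebra_simps)

lemma cong_add_dvd_modulus:
  fixes x y q :: int
  assumes "[x = y + q] (mod n)" and "m dvd n" and "m dvd q"
  shows "[x = y] (mod m)"
proof -
  have "[x = y + q] (mod m)"
    using assms(1,2) by (rule cong_dvd_modulus)
  moreover have "[y + q = y] (mod m)"
    using assms(3) by (simp add: cong_iff_dvd_diff)
  ultimately show ?thesis by (rule cong_trans)
qed

lemma fib_like_difference_quotient:
  assumes "fib_like U" and "\<And>n. m dvd U (n + P) - U n"
  obtains W where "fib_like W" and "\<And>n. U (n + P) = U n + m * W n"
proof -
  define W where "W n = (U (n + P) - U n) div m" for n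
  have "fib_like W"
    unfolding W_def using assms by (intro fib_like_div fib_like_diff fib_like_shift)
  moreover have "U (n + P) = U n + m * W n" for n
    unfolding W_def using assms(2)[of n] by simp
  ultimately show thesis by (rule that)
qed

lemma fib_like_shift_cong_triple:
  assumes step: "\<And>V n. fib_like V \<Longrightarrow> [V (n + P) = V n + m * V (n + 2)] (mod 3 * m)"
    and "3 dvd m" and "m \<noteq> 0" and U: "fib_like U"
  shows "[U (n + 3 * P) = U n + 3 * m * U (n + 2)] (mod 9 * m)"
proof -
  have periodic: "m dvd V (k + P) - V k" if "fib_like V" for V k
    using cong_add_dvd_modulus[OF step[OF that, of k]] by (simp add: cong_iff_dvd_diff)
  obtain W where W: "fib_like W" and UW: "\<And>k. U (k + P) = U k + m * W k"
    using fib_like_difference_quotient[OF U periodic[OF U]] by blast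
  obtain X where X: "fib_like X" and WX: "\<And>k. W (k + P) = W k + m * X k"
    using fib_like_difference_quotient[OF W periodic[OF W]] by blast
  have "3 * m dvd m * (W n - U (n + 2))"
    using step[OF U, of n] unfolding UW by (simp add: cong_iff_dvd_diff algebra_simps)
  then obtain s where s: "W n - U (n + 2) = 3 * s"
    using \<open>m \<noteq> 0\<close> by (auto simp: mult.commute[of 3 m])
  obtain t where t: "X (n + P) - X n = m * t"
    using periodic[OF X] by blast
  obtain c where c: "m = 3 * c"
    using \<open>3 dvd m\<close> by blast
  have "U (n + 3 * P) = U n + m * (W n + W (n + P) + W (n + 2 * P))"
    using UW[of n] UW[of "n + P"] UW[of "n + 2 * P"]
    by (simp add: algebra_simps numeral_eq_Suc)
  also have "\<dots> = U n + m * (3 * W n + 3 * m * X n + m * (X (n + P) - X n))"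
    using WX[of n] WX[of "n + P"] by (simp add: algebra_simps numeral_eq_Suc)
  finally have "U (n + 3 * P) - (U n + 3 * m * U (n + 2)) = 9 * m * (s + c * X n + c * c * t)"
    using s t c by (simp add: algebra_simps)
  then show ?thesis
    by (simp add: cong_iff_dvd_diff)
qed

lemma fib_like_shift_cong:
  assumes "fib_like U"
  shows "[U (n + 8 * 3 ^ i) = U n + 3 ^ (i + 1) * U (n + 2)] (mod 3 ^ (i + 2))"
  using assms
proof (induction i arbitrary: U n)
  case 0
  have "U (n + 8) - (U n + 3 * U (n + 2)) = 9 * (U n + 2 * U (n + 1))"
    using fib_like_add_8[OF 0] fib_likeD[OF 0, of n] by simp
  then have "9 dvd U (n + 8) - (U n + 3 * U (n + 2))"
    by (metis dvd_triv_left)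
  then show ?case by (simp add: cong_iff_dvd_diff)
next
  case (Suc i)
  have "[U (n + 3 * (8 * 3 ^ i)) = U n + 3 * 3 ^ (i + 1) * U (n + 2)] (mod 9 * 3 ^ (i + 1))"
    using Suc.IH Suc.prems by (intro fib_like_shift_cong_triple) (simp_all add: mult.commute)
  then show ?case by (simp add: algebra_simps)
qed

lemma fib_like_iterated_shift_cong:
  assumes "fib_like U"
  shows "[U (n + k * (8 * 3 ^ i)) = U n + int k * 3 ^ (i + 1) * U (n + 2)] (mod 3 ^ (i + 2))"
proof (induction k arbitrary: n)
  case (Suc k)
  define P :: nat and m :: int where "P = 8 * 3 ^ i" and "m = 3 ^ (i + 1)"
  define N where "N = n + k * P"
  have "N + 2 = n + 2 + k * P"
    unfolding N_def by simp
  then have "[U (N + 2) = U (n + 2) + int k * m * U (n + 2 + 2)] (mod 3 ^ (i + 2))"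
    using Suc.IH[of "n + 2"] unfolding P_def m_def by simp
  then have "[U (N + 2) = U (n + 2)] (mod 3)"
    by (rule cong_add_dvd_modulus) (simp_all add: m_def)
  then have "[m * U (N + 2) = m * U (n + 2)] (mod 3 ^ (i + 2))"
    using cong_cmult_leftI[of _ _ 3 m] by (simp add: m_def mult.commute)
  moreover have "[U N = U n + int k * m * U (n + 2)] (mod 3 ^ (i + 2))"
    using Suc.IH[of n] unfolding N_def P_def m_def .
  ultimately have "[U N + m * U (N + 2) = U n + int k * m * U (n + 2) + m * U (n + 2)] (mod 3 ^ (i + 2))"
    by (intro cong_add)
  with fib_like_shift_cong[OF assms, of N i]
  have "[U (N + P) = U n + int (Suc k) * m * U (n + 2)] (mod 3 ^ (i + 2))"
    unfolding P_def m_def by (auto simp: algebra_simps intro: cong_trans)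
  then show ?case
    unfolding N_def P_def m_def by (simp add: algebra_simps)
qed simp

lemma ex_less_8: "(\<exists>n<(8::nat). P n) \<longleftrightarrow> P 0 \<or> P 1 \<or> P 2 \<or> P 3 \<or> P 4 \<or> P 5 \<or> P 6 \<or> P 7"
  by (simp add: numeral_eq_Suc Ex_less_Suc2)

lemma fib_like_mod_3_hits:
  assumes "fib_like U" and "\<not> (3 dvd U 0 \<and> 3 dvd U 1)"
  shows "\<exists>n. [U n = r] (mod 3) \<and> \<not> 3 dvd U (n + 2)"
proof -
  define x y where "x = U 0 mod 3" and "y = U 1 mod 3"
  define V where "V n = int (fib (n + 1)) * x + int (fib n) * (y - x)" for n
  have UV: "[U n = V n] (mod 3)" for n
    unfolding fib_like_closed_form[OF assms(1), of n] V_def x_def y_def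
    by (intro cong_add cong_mult cong_diff cong_refl) (simp_all add: cong_def)
  \<comment> \<open>Residues mod 3 have period 8, so one period per nonzero initial pair suffices.\<close>
  have residue_table: "\<exists>n<8. V n mod 3 = r' \<and> V (n + 2) mod 3 \<noteq> 0"
    if "x \<in> {0,1,2}" "y \<in> {0,1,2}" "r' \<in> {0,1,2}" "(x, y) \<noteq> (0, 0)" for r'
    using that unfolding ex_less_8 V_def
    by (elim insertE emptyE) (simp_all add: eval_nat_numeral)
  have residues: "x \<in> {0,1,2}" "y \<in> {0,1,2}" "r mod 3 \<in> {0,1,2}"
    unfolding x_def y_def by auto
  have "(x, y) \<noteq> (0, 0)"
    using assms(2) unfolding x_def y_def by (simp add: dvd_eq_mod_eq_0)
  from residue_table[OF residues this]
  obtain n where "V n mod 3 = r mod 3" and "V (n + 2) mod 3 \<noteq> 0"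
    by blast
  moreover have "[U n = V n] (mod 3)" and "[U (n + 2) = V (n + 2)] (mod 3)"
    by (rule UV)+
  ultimately have "[U n = r] (mod 3)" and "\<not> 3 dvd U (n + 2)"
    unfolding cong_def dvd_eq_mod_eq_0 by simp_all
  then show ?thesis by blast
qed

lemma ex_nat_mult_cong:
  fixes u d m :: int
  assumes "coprime u m" and "m > 0"
  shows "\<exists>k::nat. [int k * u = d] (mod m)"
proof -
  obtain v where v: "[u * v = 1] (mod m)"
    using cong_solve_coprime_int[OF assms(1)] by blast
  define k where "k = nat (v * d mod m)"
  have "[int k * u = v * d * u] (mod m)"
    unfolding k_def using assms(2) by (simp add: cong_def mod_simps)
  also have "[v * d * u = 1 * d] (mod m)"
    using cong_scalar_right[OF v, of d] by (simp add: algebra_simps)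
  finally show ?thesis by auto
qed

lemma fib_like_hits_mod_power_3:
  assumes "fib_like U" and "\<not> (3 dvd U 0 \<and> 3 dvd U 1)"
  shows "\<exists>n. [U n = r] (mod 3 ^ (i + 1)) \<and> \<not> 3 dvd U (n + 2)"
proof (induction i arbitrary: r)
  case 0
  show ?case using fib_like_mod_3_hits[OF assms] by simp
next
  case (Suc i)
  define m :: int where "m = 3 ^ (i + 1)"
  obtain n where "[U n = r] (mod m)" and u: "\<not> 3 dvd U (n + 2)"
    using Suc.IH unfolding m_def by blast
  then have "m dvd r - U n"
    by (simp add: cong_iff_dvd_diff dvd_diff_commute)
  then obtain d where d: "r = U n + m * d"
    by (metis dvd_def diff_add_cancel add.commute)
  have "coprime (U (n + 2)) 3"
    using u prime_imp_coprime[of "3::int" "U (n + 2)"] by (simp add: coprime_commute)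
  then obtain k :: nat where "[int k * U (n + 2) = d] (mod 3)"
    using ex_nat_mult_cong[of "U (n + 2)" 3 d] by auto
  then have "[m * (int k * U (n + 2)) = m * d] (mod m * 3)"
    by (rule cong_cmult_leftI)
  then have "[U n + int k * 3 ^ (i + 1) * U (n + 2) = r] (mod 3 ^ (i + 2))"
    unfolding d m_def by (simp add: cong_add_lcancel algebra_simps)
  with fib_like_iterated_shift_cong[OF assms(1), of n k i]
  have hit: "[U (n + k * (8 * 3 ^ i)) = r] (mod 3 ^ (i + 2))"
    by (rule cong_trans)
  have "[U (n + 2 + k * (8 * 3 ^ i)) = U (n + 2)] (mod 3)"
    using fib_like_iterated_shift_cong[OF assms(1), of "n + 2" k i]
    by (rule cong_add_dvd_modulus) simp_all
  then have "\<not> 3 dvd U (n + k * (8 * 3 ^ i) + 2)"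
    using u by (simp add: cong_def dvd_eq_mod_eq_0 add_ac)
  with hit show ?case
    by (intro exI[of _ "n + k * (8 * 3 ^ i)"]) simp
qed

theorem mainTheorem9:
  fixes a b :: int and j :: nat
  assumes "gcd a b = 1" and "j \<ge> 1"
  shows "complete_mod (gib a b) (3 ^ j)"
  unfolding complete_mod_def
proof
  fix r :: int
  obtain i where j: "j = i + 1"
    using assms(2) by (metis le_add_diff_inverse2)
  have "\<not> (3 dvd a \<and> 3 dvd b)"
  proof
    assume "3 dvd a \<and> 3 dvd b"
    then have "3 dvd gcd a b" by simp
    with assms(1) show False by simp
  qed
  then obtain n where "[gib a b (n + 1) = r] (mod 3 ^ j)"
    using fib_like_hits_mod_power_3[OF fib_like_gib, of a b r i] unfolding j
    by (force simp: numeral_eq_Suc)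
  then show "\<exists>n\<ge>1. [gib a b n = r] (mod 3 ^ j)"
    by (intro exI[of _ "n + 1"]) simp
qed

end
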